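(* Let $(B,\lfloor\cdot,\cdot\rfloor)$ be an SSD space with quadratic form $q$, let $P\subset B$ be $q$-positive, and suppose $\Phi_P(b)\ge q(b)$ for all $b\in B$. Then $P$ is premaximally $q$-positive and $P^{\pi}=\{b\in B:\Phi_P(b)=q(b)\}$.
   Context: An SSD space is a pair $(B,\lfloor\cdot,\cdot\rfloor)$ with $B$ a nonzero real vector space and $\lfloor\cdot,\cdot\rfloor$ a symmetric bilinear form; $q(b)=\frac12\lfloor b,b\rfloor$. A nonempty $A\subset B$ is $q$-positive if $q(b-c)\ge0$ for all $b,c\in A$; maximally $q$-positive if $q$-positive and not properly contained in another $q$-positive set. $A^{\pi}:=\{b\in B: q(b-a)\ge0\ \forall a\in A\}$. $\Phi_A(x)=\sup_{a\in A}\{\lfloor x,a\rfloor-q(a)\}$ for nonempty $A$. $P$ is premaximally $q$-positive if there is a unique maximally $q$-positive set containing $P$. *)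

theory Defs
  imports "HOL-Analysis.Analysis"
begin

definition ssd_space :: "('b::real_vector \<Rightarrow> 'b \<Rightarrow> real) \<Rightarrow> bool" where
  "ssd_space f \<longleftrightarrow> (\<exists>x::'b. x \<noteq> 0) \<and> (\<forall>x y. f x y = f y x) \<and>
     (\<forall>y. linear (\<lambda>x. f x y))"

definition qf :: "('b \<Rightarrow> 'b \<Rightarrow> real) \<Rightarrow> 'b \<Rightarrow> real" where
  "qf f b = f b b / 2"

definition q_positive :: "('b::real_vector \<Rightarrow> 'b \<Rightarrow> real) \<Rightarrow> 'b set \<Rightarrow> bool" where
  "q_positive f A \<longleftrightarrow> A \<noteq> {} \<and> (\<forall>b\<in>A. \<forall>c\<in>A. qf f (b - c) \<ge> 0)"

definition max_q_positive :: "('b::real_vector \<Rightarrow> 'b \<Rightarrow> real) \<Rightarrow> 'b set \<Rightarrow> bool" where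
  "max_q_positive f A \<longleftrightarrow> q_positive f A \<and> (\<forall>A'. q_positive f A' \<and> A \<subseteq> A' \<longrightarrow> A' = A)"

definition pi_set :: "('b::real_vector \<Rightarrow> 'b \<Rightarrow> real) \<Rightarrow> 'b set \<Rightarrow> 'b set" where
  "pi_set f A = {b. \<forall>a\<in>A. qf f (b - a) \<ge> 0}"

text \<open>\<Phi>_A, valued in the extended reals since the supremum may be infinite.\<close>
definition Phi :: "('b \<Rightarrow> 'b \<Rightarrow> real) \<Rightarrow> 'b set \<Rightarrow> 'b \<Rightarrow> ereal" where
  "Phi f A x = (SUP a\<in>A. ereal (f x a - qf f a))"

definition premax_q_positive :: "('b::real_vector \<Rightarrow> 'b \<Rightarrow> real) \<Rightarrow> 'b set \<Rightarrow> bool" where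
  "premax_q_positive f P \<longleftrightarrow> (\<exists>!M. max_q_positive f M \<and> P \<subseteq> M)"

end

theory Submission
  imports Defs
begin

text \<open>Expanding \<open>q(b - a) \<ge> 0\<close> shows that \<open>b \<in> P\<^sup>\<pi>\<close> exactly when \<open>\<Phi>\<^sub>P(b) \<le> q(b)\<close>; under
  the hypothesis \<open>\<Phi>\<^sub>P \<ge> q\<close> this gives the description of \<open>P\<^sup>\<pi>\<close>. For \<open>b, c \<in> P\<^sup>\<pi>\<close> the
  hypothesis at the midpoint \<open>m\<close> gives \<open>q(m) \<le> \<Phi>\<^sub>P(m) \<le> (q(b) + q(c))/2\<close>, which is
  equivalent to \<open>q(b - c) \<ge> 0\<close>; so \<open>P\<^sup>\<pi>\<close> is \<open>q\<close>-positive. Since every \<open>q\<close>-positive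
  superset of \<open>P\<close> lies in \<open>P\<^sup>\<pi>\<close>, the set \<open>P\<^sup>\<pi>\<close> is the unique maximally \<open>q\<close>-positive
  set containing \<open>P\<close>.\<close>

lemma ssd_space_bilinear:
  assumes "ssd_space f"
  shows "f (x + y) z = f x z + f y z" "f (x - y) z = f x z - f y z"
    "f (c *\<^sub>R x) z = c * f x z" "f z (x + y) = f z x + f z y"
    "f z (x - y) = f z x - f z y" "f z (c *\<^sub>R x) = c * f z x"
    "f x y = f y x"
proof -
  have lin: "linear (\<lambda>x. f x z)" for z
    using assms unfolding ssd_space_def by blast
  have sym: "f x y = f y x" for x y
    using assms unfolding ssd_space_def by blast
  show "f (x + y) z = f x z + f y z" "f (x - y) z = f x z - f y z"
    "f (c *\<^sub>R x) z = c * f x z"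
    using linear_add[OF lin] linear_diff[OF lin] linear_scale[OF lin] by simp_all
  then show "f z (x + y) = f z x + f z y" "f z (x - y) = f z x - f z y"
    "f z (c *\<^sub>R x) = c * f z x" "f x y = f y x"
    using linear_add[OF lin] linear_diff[OF lin] linear_scale[OF lin] sym by simp_all
qed

lemma qf_diff:
  assumes "ssd_space f"
  shows "qf f (b - a) = qf f b - f b a + qf f a"
proof -
  note bilin = ssd_space_bilinear[OF assms]
  have "f (b - a) (b - a) = f b b - 2 * f b a + f a a"
    using bilin(7)[of a b] by (simp add: bilin(2,5))
  then show ?thesis
    unfolding qf_def by (simp add: field_simps)
qed

lemma qf_midpoint:
  assumes "ssd_space f"
  shows "qf f ((1/2) *\<^sub>R (b + c)) = (qf f b + f b c + qf f c) / 4"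
proof -
  note bilin = ssd_space_bilinear[OF assms]
  have "f ((1/2) *\<^sub>R (b + c)) ((1/2) *\<^sub>R (b + c)) = (f b b + 2 * f b c + f c c) / 4"
    using bilin(7)[of c b] by (simp add: bilin(1,3,4,6) field_simps)
  then show ?thesis
    unfolding qf_def by (simp add: field_simps)
qed

lemma Phi_le_ereal_iff: "Phi f P x \<le> ereal r \<longleftrightarrow> (\<forall>a\<in>P. f x a - qf f a \<le> r)"
  unfolding Phi_def by (simp add: SUP_le_iff)

lemma mem_pi_set_iff_Phi_le:
  assumes "ssd_space f"
  shows "b \<in> pi_set f P \<longleftrightarrow> Phi f P b \<le> ereal (qf f b)"
  unfolding pi_set_def Phi_le_ereal_iff using qf_diff[OF assms, of b] by force

lemma subset_pi_set_if_q_positive: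
  assumes "q_positive f M" "P \<subseteq> M"
  shows "M \<subseteq> pi_set f P"
  using assms unfolding q_positive_def pi_set_def by blast

lemma pi_set_q_positive:
  assumes "ssd_space f" "q_positive f P" "\<forall>b. Phi f P b \<ge> ereal (qf f b)"
  shows "q_positive f (pi_set f P)"
  unfolding q_positive_def
proof (intro conjI ballI)
  show "pi_set f P \<noteq> {}"
    using subset_pi_set_if_q_positive[OF assms(2)] assms(2) unfolding q_positive_def by blast
  fix b c assume "b \<in> pi_set f P" "c \<in> pi_set f P"
  then have "\<forall>a\<in>P. f b a - qf f a \<le> qf f b" "\<forall>a\<in>P. f c a - qf f a \<le> qf f c"
    by (simp_all add: mem_pi_set_iff_Phi_le[OF assms(1)] Phi_le_ereal_iff)
  define m where "m = (1/2) *\<^sub>R (b + c)"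
  have "\<forall>a\<in>P. f m a - qf f a \<le> (qf f b + qf f c) / 2"
  proof
    fix a assume "a \<in> P"
    have "f m a = (f b a + f c a) / 2"
      unfolding m_def by (simp add: ssd_space_bilinear[OF assms(1)])
    then show "f m a - qf f a \<le> (qf f b + qf f c) / 2"
      using \<open>a \<in> P\<close> \<open>\<forall>a\<in>P. f b a - qf f a \<le> qf f b\<close> \<open>\<forall>a\<in>P. f c a - qf f a \<le> qf f c\<close>
      by fastforce
  qed
  then have "ereal (qf f m) \<le> ereal ((qf f b + qf f c) / 2)"
    using assms(3) Phi_le_ereal_iff order_trans by metis
  then show "0 \<le> qf f (b - c)"
    using qf_midpoint[OF assms(1), of b c] qf_diff[OF assms(1), of b c] by (simp add: m_def)
qed

lemma premax_q_positive_if_pi_set_q_positive: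
  assumes "q_positive f P" "q_positive f (pi_set f P)"
  shows "premax_q_positive f P"
proof -
  have "P \<subseteq> pi_set f P"
    using subset_pi_set_if_q_positive[OF assms(1)] by blast
  have max: "max_q_positive f (pi_set f P)"
    unfolding max_q_positive_def
    using assms(2) subset_pi_set_if_q_positive \<open>P \<subseteq> pi_set f P\<close> by blast
  show ?thesis
    unfolding premax_q_positive_def
  proof (rule ex1I[of _ "pi_set f P"])
    fix M assume "max_q_positive f M \<and> P \<subseteq> M"
    then show "M = pi_set f P"
      using subset_pi_set_if_q_positive assms(2) unfolding max_q_positive_def by blast
  qed (use max \<open>P \<subseteq> pi_set f P\<close> in blast)
qed

theorem mainTheorem4:
  fixes f :: "'b::real_vector \<Rightarrow> 'b \<Rightarrow> real" and P :: "'b set"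
  assumes "ssd_space f"
    and "q_positive f P"
    and "\<forall>b. Phi f P b \<ge> ereal (qf f b)"
  shows "premax_q_positive f P \<and> pi_set f P = {b. Phi f P b = ereal (qf f b)}"
proof
  show "premax_q_positive f P"
    using premax_q_positive_if_pi_set_q_positive pi_set_q_positive assms by blast
  show "pi_set f P = {b. Phi f P b = ereal (qf f b)}"
    using mem_pi_set_iff_Phi_le[OF assms(1)] assms(3) antisym by blast
qed

end
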